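(* Assume the sparsity setting with $1\le p\le2$. Let $(c^\ast,s^\ast)\in X\times Y$, $u^\ast=B(c^\ast,s^\ast)$, with $c^\ast$ a $\Phi_p$-minimizing solution, and let $u_\delta\in Z$, $s_{\mathrm{mod},\epsilon}\in Y$ with $\|u^\ast-u_\delta\|\le\delta$, $\|s^\ast-s_{\mathrm{mod},\epsilon}\|\le\epsilon$. Let $0<\alpha_{\max}<\infty$ and assume there exist $\kappa_1\in[0,1)$, $\kappa_2\ge0$, $0\le\kappa_3<\min\{1,\gamma/(2\alpha_{\max})\}$ and $\xi^\ast=(\xi_{c^\ast},\xi_{s^\ast})\in\partial\tilde{\mathcal{R}}(c^\ast,s^\ast)$ such that for all $(c,s)\in X\times Y$ $$\langle\xi^\ast,(c^\ast-c,s^\ast-s)\rangle\le\kappa_1D^{\xi^\ast}_{\tilde{\mathcal{R}}}((c,s),(c^\ast,s^\ast))+\kappa_2\|B(c,s)-B(c^\ast,s^\ast)\|+\kappa_3\|s-s^\ast\|^2.$$ For $0<\alpha\le\alpha_{\max}$ let $(c^\alpha,s^\alpha)$ be a minimizer of $J^{u_\delta,s_{\mathrm{mod},\epsilon}}_{\alpha,\nu_1\alpha,\nu_2\alpha}$. If $\alpha\sim\delta+\epsilon$, then as $\delta+\epsilon\to0$ $$D^{\xi^\ast}_{\tilde{\mathcal{R}}}((c^\alpha,s^\alpha),(c^\ast,s^\ast))=\mathcal{O}(\delta+\epsilon),\qquad\|B(c^\alpha,s^\alpha)-B(c^\ast,s^\ast)\|=\mathcal{O}(\delta+\epsilon).$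$
   Context: Sparsity setting: $X,Y,Z$ are Hilbert spaces; $X\times Y$ carries the inner product $\langle (c_1,s_1),(c_2,s_2)\rangle=\langle c_1,c_2\rangle_X+\langle s_1,s_2\rangle_Y$. $B:X\times Y\to Z$ is bilinear, satisfies $\|B(c,s)\|_Z\le C\|c\|_X\|s\|_Y$ for some $C>0$, and is sequentially weak-weak continuous. $Y_n\subset Y$ is a finite-dimensional subspace, $P:Y\to Y_n$ is linear and bounded, $s_{\mathrm{calib}}\in Y_n$. $\mathcal{R}_s:Y\to[0,\infty)$ is proper, convex and weakly lower semi-continuous. $\{\varphi_i\}_{i\in\mathbb{N}}$ is an orthonormal basis of $X$, weights satisfy $1\le w_i<\infty$, and $\Phi_p(c)=\sum_iw_i|\langle c,\varphi_i\rangle|^p$. Fix $\gamma>0$ and $\nu_1,\nu_2\in(0,\infty)$. $J^{u,s_m}_{\alpha,\beta,\mu}(c,s)=\frac12\|B(c,s)-u\|^2+\frac{\gamma}{2}\|s-s_m\|^2+\frac{\mu}{2}\|P(s)-s_{\mathrm{calib}}\|^2+\alpha\Phi_p(c)+\beta\mathcal{R}_s(s)$; $\tilde{\mathcal{R}}(c,s)=\Phi_p(c)+\frac{\nu_2}{2}\|P(s)-s_{\mathrm{calib}}\|^2+\nu_1\mathcal{R}_s(s)$. $c^\ast$ is a $\Phi_p$-minimizing solution if $c^\ast\in\arg\min\{\Phi_p(c):B(c,s^\ast)=u^\ast\}$. For a convex functional $\mathcal{R}$ and $\xi\in\partial\mathcal{R}(x^\ast)$, $D^{\xi}_{\mathcal{R}}(x,x^\ast)=\mathcal{R}(x)-\mathcal{R}(x^\ast)-\langle\xi,x-x^\ast\rangle$.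 $\alpha\sim\delta+\epsilon$ means $m(\delta+\epsilon)\le\alpha\le M(\delta+\epsilon)$ for constants $0<m\le M$. *)

theory Defs
  imports "HOL-Analysis.Analysis"
begin

definition weak_conv :: "(nat \<Rightarrow> 'a::real_inner) \<Rightarrow> 'a \<Rightarrow> bool" where
  "weak_conv xs x \<longleftrightarrow> (\<forall>z. (\<lambda>n. inner (xs n) z) \<longlonglongrightarrow> inner x z)"

definition seq_weak_weak_cont :: "('x::real_inner \<Rightarrow> 'y::real_inner \<Rightarrow> 'z::real_inner) \<Rightarrow> bool" where
  "seq_weak_weak_cont B \<longleftrightarrow>
     (\<forall>cs ss c s. weak_conv (\<lambda>n. (cs n, ss n)) (c, s) \<longrightarrow>
        weak_conv (\<lambda>n. B (cs n) (ss n)) (B c s))"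

definition weakly_lsc :: "('a::real_inner \<Rightarrow> real) \<Rightarrow> bool" where
  "weakly_lsc f \<longleftrightarrow>
     (\<forall>xs x. weak_conv xs x \<longrightarrow> ereal (f x) \<le> liminf (\<lambda>n. ereal (f (xs n))))"

definition orthonormal_basis :: "(nat \<Rightarrow> 'a::real_inner) \<Rightarrow> bool" where
  "orthonormal_basis \<phi> \<longleftrightarrow>
     (\<forall>i j. inner (\<phi> i) (\<phi> j) = (if i = j then 1 else 0)) \<and>
     (\<forall>c. (\<lambda>n. \<Sum>i<n. inner c (\<phi> i) *\<^sub>R \<phi> i) \<longlonglongrightarrow> c)"

definition fin_dim_subspace :: "'a::real_vector set \<Rightarrow> bool" where
  "fin_dim_subspace V \<longleftrightarrow> subspace V \<and> (\<exists>S. finite S \<and> span S = V)"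

definition Phi_p :: "(nat \<Rightarrow> real) \<Rightarrow> (nat \<Rightarrow> 'a::real_inner) \<Rightarrow> real \<Rightarrow> 'a \<Rightarrow> ereal" where
  "Phi_p w \<phi> p c = (\<Sum>i. ereal (w i * \<bar>inner c (\<phi> i)\<bar> powr p))"

definition J_fun ::
  "('x::real_inner \<Rightarrow> 'y::real_inner \<Rightarrow> 'z::real_inner) \<Rightarrow> ('y \<Rightarrow> 'y) \<Rightarrow> 'y \<Rightarrow> real
   \<Rightarrow> ('x \<Rightarrow> ereal) \<Rightarrow> ('y \<Rightarrow> real)
   \<Rightarrow> 'z \<Rightarrow> 'y \<Rightarrow> real \<Rightarrow> real \<Rightarrow> real \<Rightarrow> 'x \<times> 'y \<Rightarrow> ereal" where
  "J_fun B P s_calib \<gamma> Phi Rs u s_m \<alpha> \<beta> \<mu> cs =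
     (case cs of (c, s) \<Rightarrow>
       ereal (1/2 * (norm (B c s - u))\<^sup>2 + \<gamma>/2 * (norm (s - s_m))\<^sup>2
              + \<mu>/2 * (norm (P s - s_calib))\<^sup>2)
       + ereal \<alpha> * Phi c + ereal (\<beta> * Rs s))"

definition R_tilde ::
  "('y::real_inner \<Rightarrow> 'y) \<Rightarrow> 'y \<Rightarrow> ('x::real_inner \<Rightarrow> ereal) \<Rightarrow> ('y \<Rightarrow> real)
   \<Rightarrow> real \<Rightarrow> real \<Rightarrow> 'x \<times> 'y \<Rightarrow> ereal" where
  "R_tilde P s_calib Phi Rs \<nu>1 \<nu>2 cs =
     (case cs of (c, s) \<Rightarrow>
        Phi c + ereal (\<nu>2/2 * (norm (P s - s_calib))\<^sup>2 + \<nu>1 * Rs s))"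

definition subdiff :: "('a::real_inner \<Rightarrow> ereal) \<Rightarrow> 'a \<Rightarrow> 'a set" where
  "subdiff f x = {\<xi>. \<bar>f x\<bar> \<noteq> \<infinity> \<and> (\<forall>y. f x + ereal (inner \<xi> (y - x)) \<le> f y)}"

definition bregman :: "('a::real_inner \<Rightarrow> ereal) \<Rightarrow> 'a \<Rightarrow> 'a \<Rightarrow> 'a \<Rightarrow> ereal" where
  "bregman f \<xi> x xstar = f x - f xstar - ereal (inner \<xi> (x - xstar))"

end

theory Submission
  imports Defs
begin

(*
  Comparing the Tikhonov functional at the minimiser (c\<alpha>, s\<alpha>) with its value at (cstar, sstar),
  and writing R~(c\<alpha>, s\<alpha>) - R~(cstar, sstar) as the Bregman distance D plus the pairing with
  the subgradient \<xi>, the source condition turns minimality into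
    |B(c\<alpha>,s\<alpha>) - u\<delta>|^2/2 + \<gamma>/2 |s\<alpha> - smod|^2 + \<alpha> (1 - \<kappa>1) D
      <= \<delta>^2/2 + \<gamma>/2 \<epsilon>^2 + \<alpha> (\<kappa>2 |B(c\<alpha>,s\<alpha>) - ustar| + \<kappa>3 |s\<alpha> - sstar|^2).
  As \<alpha> \<kappa>3 < \<gamma>/2, the last term is absorbed by the left-hand side, leaving a quadratic
  inequality for |B(c\<alpha>,s\<alpha>) - ustar| whose solution is O(\<delta> + \<epsilon>); dividing by \<alpha> ~ \<delta> + \<epsilon>
  then bounds D by O(\<delta> + \<epsilon>). Existence of minimisers is assumed.
*)

lemma Phi_p_nonneg:
  assumes "\<forall>i. 0 \<le> w i"
  shows "0 \<le> Phi_p w \<phi> p c"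
  unfolding Phi_p_def using assms by (intro suminf_0_le) simp

lemma J_fun_eq_fidelity_plus_R_tilde:
  "J_fun B P s_calib \<gamma> Phi Rs u s_m \<alpha> (\<nu>1 * \<alpha>) (\<nu>2 * \<alpha>) (c, s) =
     ereal (1/2 * (norm (B c s - u))\<^sup>2 + \<gamma>/2 * (norm (s - s_m))\<^sup>2)
     + ereal \<alpha> * R_tilde P s_calib Phi Rs \<nu>1 \<nu>2 (c, s)"
proof -
  have "ereal \<alpha> * R_tilde P s_calib Phi Rs \<nu>1 \<nu>2 (c, s)
      = ereal \<alpha> * Phi c + ereal (\<alpha> * (\<nu>2/2 * (norm (P s - s_calib))\<^sup>2 + \<nu>1 * Rs s))"
    using ereal_distrib[of "Phi c" "ereal (\<nu>2/2 * (norm (P s - s_calib))\<^sup>2 + \<nu>1 * Rs s)" "ereal \<alpha>"]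
    by (simp add: R_tilde_def mult.commute)
  then show ?thesis
    by (simp add: J_fun_def algebra_simps flip: plus_ereal.simps)
qed

lemma bregman_estimate_of_minimizer:
  fixes R :: "'a::real_inner \<Rightarrow> ereal"
  assumes min: "ereal (f x) + ereal \<alpha> * R x \<le> ereal (f y) + ereal \<alpha> * R y"
    and sub: "\<xi> \<in> subdiff R y" and \<alpha>: "0 < \<alpha>" and R_x: "R x \<noteq> -\<infinity>"
  obtains D where "bregman R \<xi> x y = ereal D" "0 \<le> D"
    "f x + \<alpha> * (D + inner \<xi> (x - y)) \<le> f y"
proof -
  from sub obtain r0 where r0: "R y = ereal r0"
    and subgrad: "R y + ereal (inner \<xi> (x - y)) \<le> R x"
    unfolding subdiff_def by (cases "R y") auto
  have "R x \<noteq> \<infinity>"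
  proof
    assume "R x = \<infinity>"
    then show False using min \<alpha> by (simp add: r0)
  qed
  with R_x obtain r1 where r1: "R x = ereal r1" by (cases "R x") auto
  show thesis
  proof
    show "bregman R \<xi> x y = ereal (r1 - r0 - inner \<xi> (x - y))"
      by (simp add: bregman_def r0 r1)
    show "0 \<le> r1 - r0 - inner \<xi> (x - y)" using subgrad by (simp add: r0 r1)
    show "f x + \<alpha> * (r1 - r0 - inner \<xi> (x - y) + inner \<xi> (x - y)) \<le> f y"
      using min by (simp add: r0 r1 algebra_simps)
  qed
qed

lemma minimizer_variational_inequality:
  fixes B :: "'x::real_inner \<Rightarrow> 'y::real_inner \<Rightarrow> 'z::real_inner"
  assumes min: "J_fun B P s_calib \<gamma> Phi Rs u s_m \<alpha> (\<nu>1 * \<alpha>) (\<nu>2 * \<alpha>) (c\<alpha>, s\<alpha>)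
      \<le> J_fun B P s_calib \<gamma> Phi Rs u s_m \<alpha> (\<nu>1 * \<alpha>) (\<nu>2 * \<alpha>) (cstar, sstar)"
    and Phi: "\<forall>c. 0 \<le> Phi c" and \<alpha>: "0 < \<alpha>" and \<gamma>: "0 \<le> \<gamma>"
    and sub: "(\<xi>c, \<xi>s) \<in> subdiff (R_tilde P s_calib Phi Rs \<nu>1 \<nu>2) (cstar, sstar)"
    and source: "ereal (inner (\<xi>c, \<xi>s) (cstar - c\<alpha>, sstar - s\<alpha>))
      \<le> ereal \<kappa>1 * bregman (R_tilde P s_calib Phi Rs \<nu>1 \<nu>2) (\<xi>c, \<xi>s) (c\<alpha>, s\<alpha>) (cstar, sstar)
        + ereal e"
    and \<delta>: "norm (B cstar sstar - u) \<le> \<delta>" and \<epsilon>: "norm (sstar - s_m) \<le> \<epsilon>"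
  obtains D
  where "bregman (R_tilde P s_calib Phi Rs \<nu>1 \<nu>2) (\<xi>c, \<xi>s) (c\<alpha>, s\<alpha>) (cstar, sstar) = ereal D"
    "0 \<le> D"
    "(norm (B c\<alpha> s\<alpha> - u))\<^sup>2/2 + \<gamma>/2 * (norm (s\<alpha> - s_m))\<^sup>2 + \<alpha> * (1 - \<kappa>1) * D
      \<le> \<delta>\<^sup>2/2 + \<gamma>/2 * \<epsilon>\<^sup>2 + \<alpha> * e"
proof -
  define f where "f = (\<lambda>(c, s). 1/2 * (norm (B c s - u))\<^sup>2 + \<gamma>/2 * (norm (s - s_m))\<^sup>2)"
  have "ereal (f (c\<alpha>, s\<alpha>)) + ereal \<alpha> * R_tilde P s_calib Phi Rs \<nu>1 \<nu>2 (c\<alpha>, s\<alpha>)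
      \<le> ereal (f (cstar, sstar)) + ereal \<alpha> * R_tilde P s_calib Phi Rs \<nu>1 \<nu>2 (cstar, sstar)"
    using min by (simp add: J_fun_eq_fidelity_plus_R_tilde f_def)
  moreover have "R_tilde P s_calib Phi Rs \<nu>1 \<nu>2 (c\<alpha>, s\<alpha>) \<noteq> -\<infinity>"
    using Phi[rule_format, of c\<alpha>] by (auto simp: R_tilde_def)
  ultimately obtain D
    where D: "bregman (R_tilde P s_calib Phi Rs \<nu>1 \<nu>2) (\<xi>c, \<xi>s) (c\<alpha>, s\<alpha>) (cstar, sstar) = ereal D"
      "0 \<le> D"
    and est: "f (c\<alpha>, s\<alpha>) + \<alpha> * (D + inner (\<xi>c, \<xi>s) ((c\<alpha>, s\<alpha>) - (cstar, sstar)))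
      \<le> f (cstar, sstar)"
    using bregman_estimate_of_minimizer[OF _ sub \<alpha>] by blast
  have "- inner (\<xi>c, \<xi>s) ((c\<alpha>, s\<alpha>) - (cstar, sstar)) \<le> \<kappa>1 * D + e"
    using source D(1) by (simp add: inner_diff_right)
  then have "\<alpha> * (- inner (\<xi>c, \<xi>s) ((c\<alpha>, s\<alpha>) - (cstar, sstar))) \<le> \<alpha> * (\<kappa>1 * D + e)"
    using \<alpha> by (intro mult_left_mono) auto
  moreover have "f (cstar, sstar) \<le> \<delta>\<^sup>2/2 + \<gamma>/2 * \<epsilon>\<^sup>2"
    using \<delta> \<epsilon> \<gamma> by (auto simp: f_def intro!: add_mono mult_left_mono power_mono)
  ultimately show thesis
    using D est by (intro that[OF D]) (simp add: f_def algebra_simps)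
qed

lemma scaled_square_sum_le:
  fixes q S e :: real
  assumes "0 \<le> q" "q < 1"
  shows "q * (S + e)\<^sup>2 \<le> S\<^sup>2 + e\<^sup>2 / (1 - q)"
proof -
  have "(1 - q) * (S\<^sup>2 + e\<^sup>2 / (1 - q)) - (1 - q) * (q * (S + e)\<^sup>2)
      = ((1 - q) * S - q * e)\<^sup>2 + (1 - q) * e\<^sup>2"
    using assms by (simp add: field_simps power2_eq_square)
  also have "\<dots> \<ge> 0" using assms by simp
  finally show ?thesis using assms by (simp add: mult_le_cancel_left)
qed

lemma variational_inequality_absorb:
  fixes N S a b D \<alpha> \<delta> \<epsilon> \<gamma> \<kappa>1 \<kappa>2 \<kappa>3 q :: real
  assumes H: "N\<^sup>2/2 + \<gamma>/2 * S\<^sup>2 + \<alpha> * (1 - \<kappa>1) * D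
      \<le> \<delta>\<^sup>2/2 + \<gamma>/2 * \<epsilon>\<^sup>2 + \<alpha> * (\<kappa>2 * a + \<kappa>3 * b\<^sup>2)"
    and a: "0 \<le> a" "a \<le> N + \<delta>" and b: "0 \<le> b" "b \<le> S + \<epsilon>"
    and "0 \<le> \<delta>" "0 \<le> \<epsilon>" "0 \<le> \<gamma>"
    and q: "0 \<le> q" "q < 1" "\<alpha> * \<kappa>3 \<le> \<gamma>/2 * q"
  shows "a\<^sup>2/4 + \<alpha> * (1 - \<kappa>1) * D
      \<le> (1 + \<gamma>/2 + \<gamma>/2 / (1 - q)) * (\<delta> + \<epsilon>)\<^sup>2 + \<alpha> * \<kappa>2 * a"
proof -
  have "b\<^sup>2 \<le> (S + \<epsilon>)\<^sup>2" using b by (simp add: power_mono)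
  then have "\<alpha> * \<kappa>3 * b\<^sup>2 \<le> \<gamma>/2 * q * (S + \<epsilon>)\<^sup>2"
    using q assms by (intro mult_mono[OF q(3)]) auto
  also have "\<dots> \<le> \<gamma>/2 * (S\<^sup>2 + \<epsilon>\<^sup>2 / (1 - q))"
    using scaled_square_sum_le[OF q(1,2)] assms by (simp add: mult.assoc mult_left_mono)
  finally have b_absorbed: "\<alpha> * \<kappa>3 * b\<^sup>2 \<le> \<gamma>/2 * S\<^sup>2 + \<gamma>/2 / (1 - q) * \<epsilon>\<^sup>2"
    by (simp add: algebra_simps)
  have "a\<^sup>2 \<le> (N + \<delta>)\<^sup>2" using a by (simp add: power_mono)
  also have "\<dots> \<le> 2 * N\<^sup>2 + 2 * \<delta>\<^sup>2" using sum_squares_ge_zero[of "N - \<delta>" 0]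
    by (simp add: power2_eq_square algebra_simps)
  finally have a_sq: "a\<^sup>2/4 \<le> N\<^sup>2/2 + \<delta>\<^sup>2/2" by simp
  have t_sq: "\<delta>\<^sup>2 \<le> (\<delta> + \<epsilon>)\<^sup>2" "\<epsilon>\<^sup>2 \<le> (\<delta> + \<epsilon>)\<^sup>2"
    using assms by (auto intro!: power_mono)
  have "\<gamma>/2 / (1 - q) * \<epsilon>\<^sup>2 \<le> \<gamma>/2 / (1 - q) * (\<delta> + \<epsilon>)\<^sup>2"
    using t_sq q assms by (intro mult_left_mono) auto
  moreover have "\<gamma>/2 * \<epsilon>\<^sup>2 \<le> \<gamma>/2 * (\<delta> + \<epsilon>)\<^sup>2"
    using t_sq assms by (intro mult_left_mono) auto
  ultimately show ?thesis using H b_absorbed a_sq t_sq by (simp add: algebra_simps)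
qed

lemma quadratic_le_imp_linear_bound:
  fixes a t K L :: real
  assumes "0 \<le> t" "0 \<le> K" "0 \<le> L" and quad: "a\<^sup>2 \<le> K * t\<^sup>2 + L * t * a"
  shows "a \<le> (L + K + 1) * t"
proof (rule ccontr)
  assume "\<not> a \<le> (L + K + 1) * t"
  then have big: "(L + K + 1) * t < a" by simp
  then have "0 < a" using assms by (smt (verit) mult_nonneg_nonneg)
  have "K * t\<^sup>2 \<le> (K + 1) * t * ((L + K + 1) * t)"
    using assms by (simp add: power2_eq_square algebra_simps mult_right_mono)
  also have "\<dots> \<le> (K + 1) * t * a" using big assms by (intro mult_left_mono) auto
  finally have "K * t\<^sup>2 + L * t * a \<le> (L + K + 1) * t * a" by (simp add: algebra_simps)
  also have "\<dots> < a\<^sup>2" using big \<open>0 < a\<close> by (simp add: power2_eq_square)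
  finally show False using quad by simp
qed

lemma linear_bounds_of_quadratic_inequality:
  fixes a D \<alpha> t K L m \<kappa> :: real
  assumes main: "a\<^sup>2/4 + \<alpha> * (1 - \<kappa>) * D \<le> K * t\<^sup>2 + L * t * a"
    and "0 \<le> D" "0 < t" "0 \<le> K" "0 \<le> L" "0 < m" "m * t \<le> \<alpha>" "\<kappa> < 1"
  shows "a \<le> (4 * L + 4 * K + 1) * t"
    and "D \<le> (K + L * (4 * L + 4 * K + 1)) / (m * (1 - \<kappa>)) * t"
proof -
  define C where "C = 4 * L + 4 * K + 1"
  have "0 \<le> \<alpha> * (1 - \<kappa>) * D" using assms by (smt (verit) mult_nonneg_nonneg mult_pos_pos)
  then have "a\<^sup>2 \<le> (4 * K) * t\<^sup>2 + (4 * L) * t * a" using main by simp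
  then show a_le: "a \<le> (4 * L + 4 * K + 1) * t"
    using quadratic_le_imp_linear_bound[of t "4 * K" "4 * L" a] assms by (simp add: algebra_simps)
  have "\<alpha> * (1 - \<kappa>) * D \<le> K * t\<^sup>2 + L * t * a"
    using main zero_le_power2[of a] by linarith
  also have "\<dots> \<le> K * t\<^sup>2 + L * t * (C * t)"
    using a_le assms by (simp add: C_def mult_left_mono)
  finally have "\<alpha> * ((1 - \<kappa>) * D) \<le> t * ((K + L * C) * t)"
    by (simp add: power2_eq_square algebra_simps)
  moreover have "m * t * ((1 - \<kappa>) * D) \<le> \<alpha> * ((1 - \<kappa>) * D)"
    using assms by (intro mult_right_mono) auto
  ultimately have "t * (m * (1 - \<kappa>) * D) \<le> t * ((K + L * C) * t)"
    by (simp add: ac_simps)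
  then have "m * (1 - \<kappa>) * D \<le> (K + L * C) * t" using assms by simp
  then show "D \<le> (K + L * (4 * L + 4 * K + 1)) / (m * (1 - \<kappa>)) * t"
    using assms by (simp add: C_def field_simps)
qed

lemma linear_rate_of_variational_inequality:
  fixes \<gamma> \<kappa>1 \<kappa>2 \<kappa>3 \<alpha>max m M :: real
  assumes "0 < \<gamma>" "\<kappa>1 < 1" "0 \<le> \<kappa>2" "0 \<le> \<kappa>3" "\<kappa>3 < \<gamma> / (2 * \<alpha>max)"
    and "0 < \<alpha>max" "0 < m"
  shows "\<exists>C. \<forall>N S a b D \<alpha> \<delta> \<epsilon>.
    N\<^sup>2/2 + \<gamma>/2 * S\<^sup>2 + \<alpha> * (1 - \<kappa>1) * D
      \<le> \<delta>\<^sup>2/2 + \<gamma>/2 * \<epsilon>\<^sup>2 + \<alpha> * (\<kappa>2 * a + \<kappa>3 * b\<^sup>2) \<longrightarrow>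
    0 \<le> D \<and> 0 \<le> a \<and> a \<le> N + \<delta> \<and> 0 \<le> b \<and> b \<le> S + \<epsilon> \<and> 0 \<le> \<delta> \<and> 0 \<le> \<epsilon> \<and>
    0 < \<alpha> \<and> \<alpha> \<le> \<alpha>max \<and> m * (\<delta> + \<epsilon>) \<le> \<alpha> \<and> \<alpha> \<le> M * (\<delta> + \<epsilon>)
    \<longrightarrow> a \<le> C * (\<delta> + \<epsilon>) \<and> D \<le> C * (\<delta> + \<epsilon>)"
proof -
  define q where "q = 2 * \<alpha>max * \<kappa>3 / \<gamma>"
  define K where "K = 1 + \<gamma>/2 + \<gamma>/2 / (1 - q)"
  define L where "L = M * \<kappa>2"
  define C where "C = max (4 * L + 4 * K + 1) ((K + L * (4 * L + 4 * K + 1)) / (m * (1 - \<kappa>1)))"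
  have q: "0 \<le> q" "q < 1" using assms by (simp_all add: q_def field_simps)
  then have "0 \<le> K" using assms by (simp add: K_def)
  show ?thesis
  proof (intro exI[of _ C] allI impI, elim conjE)
    fix N S a b D \<alpha> \<delta> \<epsilon> :: real
    define t where "t = \<delta> + \<epsilon>"
    assume H: "N\<^sup>2/2 + \<gamma>/2 * S\<^sup>2 + \<alpha> * (1 - \<kappa>1) * D
      \<le> \<delta>\<^sup>2/2 + \<gamma>/2 * \<epsilon>\<^sup>2 + \<alpha> * (\<kappa>2 * a + \<kappa>3 * b\<^sup>2)"
      and D: "0 \<le> D" and a: "0 \<le> a" "a \<le> N + \<delta>" and b: "0 \<le> b" "b \<le> S + \<epsilon>"
      and \<delta>\<epsilon>: "0 \<le> \<delta>" "0 \<le> \<epsilon>" and \<alpha>: "0 < \<alpha>" "\<alpha> \<le> \<alpha>max"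
      and \<alpha>t: "m * (\<delta> + \<epsilon>) \<le> \<alpha>" "\<alpha> \<le> M * (\<delta> + \<epsilon>)"
    have "t \<noteq> 0" using \<alpha> \<alpha>t by (auto simp: t_def)
    then have t: "0 < t" using \<delta>\<epsilon> by (simp add: t_def)
    then have "0 \<le> L" using \<alpha> \<alpha>t assms unfolding L_def t_def
      by (smt (verit) mult_nonneg_nonneg mult_nonpos_nonneg)
    have "\<alpha> * \<kappa>3 \<le> \<gamma>/2 * q" using \<alpha> assms by (simp add: q_def mult_right_mono)
    then have "a\<^sup>2/4 + \<alpha> * (1 - \<kappa>1) * D \<le> K * t\<^sup>2 + \<alpha> * \<kappa>2 * a"
      using variational_inequality_absorb[OF H a b \<delta>\<epsilon> _ q] assms by (simp add: K_def t_def)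
    also have "\<alpha> * \<kappa>2 * a \<le> L * t * a"
      using mult_right_mono[OF \<alpha>t(2), of "\<kappa>2 * a"] a assms by (simp add: L_def t_def ac_simps)
    finally have "a\<^sup>2/4 + \<alpha> * (1 - \<kappa>1) * D \<le> K * t\<^sup>2 + L * t * a" by simp
    from linear_bounds_of_quadratic_inequality[OF this D t \<open>0 \<le> K\<close> \<open>0 \<le> L\<close>] assms \<alpha>t
    show "a \<le> C * (\<delta> + \<epsilon>) \<and> D \<le> C * (\<delta> + \<epsilon>)"
      unfolding C_def t_def by (smt (verit) max.cobounded1 max.cobounded2 mult_right_mono \<delta>\<epsilon>)
  qed
qed

theorem mainTheorem12:
  fixes B :: "'x::{real_inner,complete_space} \<Rightarrow> 'y::{real_inner,complete_space} \<Rightarrow> 'z::{real_inner,complete_space}"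
    and Yn :: "'y set" and P :: "'y \<Rightarrow> 'y" and s_calib :: 'y
    and Rs :: "'y \<Rightarrow> real" and \<phi> :: "nat \<Rightarrow> 'x" and w :: "nat \<Rightarrow> real"
    and p \<gamma> \<nu>1 \<nu>2 :: real
    and cstar :: 'x and sstar :: 'y and ustar :: 'z
    and \<alpha>max \<kappa>1 \<kappa>2 \<kappa>3 :: real and \<xi>c :: 'x and \<xi>s :: 'y
    and m M :: real
  assumes B_bilin: "bounded_bilinear B"
    and B_weak: "seq_weak_weak_cont B"
    and Yn: "fin_dim_subspace Yn"
    and P_lin: "bounded_linear P" and P_range: "\<forall>y. P y \<in> Yn"
    and s_calib: "s_calib \<in> Yn"
    and Rs_nonneg: "\<forall>s. 0 \<le> Rs s" and Rs_convex: "convex_on UNIV Rs"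
    and Rs_wlsc: "weakly_lsc Rs"
    and ONB: "orthonormal_basis \<phi>" and w_ge: "\<forall>i. 1 \<le> w i"
    and gamma: "0 < \<gamma>" and nu1: "0 < \<nu>1" and nu2: "0 < \<nu>2"
    and p: "1 \<le> p" "p \<le> 2"
    and ustar: "ustar = B cstar sstar"
    and Phi_min: "\<forall>c. B c sstar = ustar \<longrightarrow> Phi_p w \<phi> p cstar \<le> Phi_p w \<phi> p c"
    and amax: "0 < \<alpha>max"
    and k1: "0 \<le> \<kappa>1" "\<kappa>1 < 1" and k2: "0 \<le> \<kappa>2"
    and k3: "0 \<le> \<kappa>3" "\<kappa>3 < min 1 (\<gamma> / (2 * \<alpha>max))"
    and xi_sub: "(\<xi>c, \<xi>s) \<in> subdiff (R_tilde P s_calib (Phi_p w \<phi> p) Rs \<nu>1 \<nu>2) (cstar, sstar)"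
    and source: "\<forall>c s. ereal (inner (\<xi>c, \<xi>s) (cstar - c, sstar - s))
        \<le> ereal \<kappa>1 * bregman (R_tilde P s_calib (Phi_p w \<phi> p) Rs \<nu>1 \<nu>2) (\<xi>c, \<xi>s) (c, s) (cstar, sstar)
          + ereal (\<kappa>2 * norm (B c s - B cstar sstar) + \<kappa>3 * (norm (s - sstar))\<^sup>2)"
    and mM: "0 < m" "m \<le> M"
  shows "\<exists>C \<rho>. 0 < \<rho> \<and>
    (\<forall>\<delta> \<epsilon> u\<delta> smod \<alpha> c\<alpha> s\<alpha>.
       0 \<le> \<delta> \<and> 0 \<le> \<epsilon> \<and> \<delta> + \<epsilon> < \<rho> \<and>
       norm (ustar - u\<delta>) \<le> \<delta> \<and> norm (sstar - smod) \<le> \<epsilon> \<and>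
       0 < \<alpha> \<and> \<alpha> \<le> \<alpha>max \<and> m * (\<delta> + \<epsilon>) \<le> \<alpha> \<and> \<alpha> \<le> M * (\<delta> + \<epsilon>) \<and>
       (\<forall>c s. J_fun B P s_calib \<gamma> (Phi_p w \<phi> p) Rs u\<delta> smod \<alpha> (\<nu>1 * \<alpha>) (\<nu>2 * \<alpha>) (c\<alpha>, s\<alpha>)
              \<le> J_fun B P s_calib \<gamma> (Phi_p w \<phi> p) Rs u\<delta> smod \<alpha> (\<nu>1 * \<alpha>) (\<nu>2 * \<alpha>) (c, s))
       \<longrightarrow> bregman (R_tilde P s_calib (Phi_p w \<phi> p) Rs \<nu>1 \<nu>2) (\<xi>c, \<xi>s) (c\<alpha>, s\<alpha>) (cstar, sstar)
             \<le> ereal (C * (\<delta> + \<epsilon>))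
         \<and> norm (B c\<alpha> s\<alpha> - B cstar sstar) \<le> C * (\<delta> + \<epsilon>))"
proof -
  obtain C where rate: "\<forall>N S a b D \<alpha> \<delta> \<epsilon>.
      N\<^sup>2/2 + \<gamma>/2 * S\<^sup>2 + \<alpha> * (1 - \<kappa>1) * D
        \<le> \<delta>\<^sup>2/2 + \<gamma>/2 * \<epsilon>\<^sup>2 + \<alpha> * (\<kappa>2 * a + \<kappa>3 * b\<^sup>2) \<longrightarrow>
      0 \<le> D \<and> 0 \<le> a \<and> a \<le> N + \<delta> \<and> 0 \<le> b \<and> b \<le> S + \<epsilon> \<and> 0 \<le> \<delta> \<and> 0 \<le> \<epsilon> \<and>
      0 < \<alpha> \<and> \<alpha> \<le> \<alpha>max \<and> m * (\<delta> + \<epsilon>) \<le> \<alpha> \<and> \<alpha> \<le> M * (\<delta> + \<epsilon>)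
      \<longrightarrow> a \<le> C * (\<delta> + \<epsilon>) \<and> D \<le> C * (\<delta> + \<epsilon>)"
    using linear_rate_of_variational_inequality[where M = M, OF gamma k1(2) k2 k3(1) _ amax mM(1)] k3(2)
    by auto
  have Phi_nonneg: "\<forall>c. 0 \<le> Phi_p w \<phi> p c"
    using w_ge by (auto intro: Phi_p_nonneg order_trans[OF zero_le_one])
  \<comment> \<open>The bound holds for all \<delta> + \<epsilon>, so the threshold \<rho> is immaterial.\<close>
  show ?thesis
    apply (rule exI[of _ C], rule exI[of _ "1::real"], intro conjI[OF zero_less_one] allI impI)
    subgoal premises A for \<delta> \<epsilon> u\<delta> smod \<alpha> c\<alpha> s\<alpha>
    proof -
      from A have \<delta>: "norm (B cstar sstar - u\<delta>) \<le> \<delta>" and \<epsilon>: "norm (sstar - smod) \<le> \<epsilon>"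
        and \<alpha>: "0 < \<alpha>"
        and J_min: "J_fun B P s_calib \<gamma> (Phi_p w \<phi> p) Rs u\<delta> smod \<alpha> (\<nu>1 * \<alpha>) (\<nu>2 * \<alpha>) (c\<alpha>, s\<alpha>)
          \<le> J_fun B P s_calib \<gamma> (Phi_p w \<phi> p) Rs u\<delta> smod \<alpha> (\<nu>1 * \<alpha>) (\<nu>2 * \<alpha>) (cstar, sstar)"
        by (simp_all add: ustar norm_minus_commute)
      have triangle: "norm (B c\<alpha> s\<alpha> - B cstar sstar) \<le> norm (B c\<alpha> s\<alpha> - u\<delta>) + \<delta>"
        "norm (s\<alpha> - sstar) \<le> norm (s\<alpha> - smod) + \<epsilon>"
        using norm_triangle_ineq[of "B c\<alpha> s\<alpha> - u\<delta>" "u\<delta> - B cstar sstar"] \<delta>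
          norm_triangle_ineq[of "s\<alpha> - smod" "smod - sstar"] \<epsilon>
        by (simp_all add: norm_minus_commute)
      show ?thesis
        apply (rule minimizer_variational_inequality[OF J_min Phi_nonneg \<alpha> less_imp_le[OF gamma]
              xi_sub source[rule_format, of c\<alpha> s\<alpha>] \<delta> \<epsilon>])
        subgoal premises D for D
          using rate[rule_format, OF D(3)] D(1,2) A triangle by auto
        done
    qed
    done
qed

end
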